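(* Let $X$ be a $T_1$ topological space which is Čech complete (in the sense defined in the context), and let $f:X\to X$ be a topological contraction. Then $f$ has a unique fixed point.
   Context: A topological space $X$ (not assumed Tychonoff) is called Čech complete if there exists a sequence $(\mathcal{U}_i)_{i\in\mathbb{N}}$ of open covers of $X$ such that whenever $(F_m)_m$ is a centered sequence of closed subsets of $X$ (every finite subfamily has nonempty intersection) with the property that for each $i$ there is $m_i$ such that $F_{m_i}$ is contained in some member of $\mathcal{U}_i$, the intersection $\bigcap_m F_m$ is nonempty. A mapping $f:X\to X$ is closed if it maps closed sets to closed sets (continuity is not assumed). A mapping $f:X\to X$ is a topological contraction if $f$ is closed and for every open cover $\mathcal{U}$ of $X$ there exist $n\in\mathbb{N}$ and $U\in\mathcal{U}$ with $f^n[X]\subseteq U$, where $f^n$ is the $n$-fold iterate of $f$. *)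

theory Defs
  imports "HOL-Analysis.Analysis"
begin

definition open_cover :: "'a topology \<Rightarrow> 'a set set \<Rightarrow> bool" where
  "open_cover X \<U> \<longleftrightarrow> (\<forall>U\<in>\<U>. openin X U) \<and> \<Union>\<U> = topspace X"

definition centered_seq :: "(nat \<Rightarrow> 'a set) \<Rightarrow> bool" where
  "centered_seq F \<longleftrightarrow> (\<forall>K. finite K \<and> K \<noteq> {} \<longrightarrow> \<Inter>(F ` K) \<noteq> {})"

definition cech_complete :: "'a topology \<Rightarrow> bool" where
  "cech_complete X \<longleftrightarrow>
     (\<exists>\<U> :: nat \<Rightarrow> 'a set set.
        (\<forall>i. open_cover X (\<U> i)) \<and>
        (\<forall>F :: nat \<Rightarrow> 'a set.
           (\<forall>m. closedin X (F m)) \<and> centered_seq F \<and>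
           (\<forall>i. \<exists>m. \<exists>U\<in>\<U> i. F m \<subseteq> U)
           \<longrightarrow> \<Inter>(range F) \<noteq> {}))"

definition topological_contraction :: "'a topology \<Rightarrow> ('a \<Rightarrow> 'a) \<Rightarrow> bool" where
  "topological_contraction X f \<longleftrightarrow>
     f \<in> topspace X \<rightarrow> topspace X \<and> closed_map X X f \<and>
     (\<forall>\<U>. open_cover X \<U> \<longrightarrow> (\<exists>n::nat. \<exists>U\<in>\<U>. (f ^^ n) ` topspace X \<subseteq> U))"

end

theory Submission
  imports Defs
begin

text \<open>The iterated images \<open>f\<^sup>n[X]\<close> form a decreasing sequence of nonempty closed sets, and by
  the contraction property some \<open>f\<^sup>n[X]\<close> lies inside a member of every open cover; Cech
  completeness therefore yields a point \<open>a\<close> in all of them. In a \<open>T\<^sub>1\<close> space two distinct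
  points \<open>x\<close>, \<open>y\<close> give the open cover \<open>{X - {x}, X - {y}}\<close>, so at most one point lies in every
  \<open>f\<^sup>n[X]\<close>. Both \<open>f a\<close> and every fixed point lie in every \<open>f\<^sup>n[X]\<close>, hence all equal \<open>a\<close>.\<close>

definition shrinks_into_open_covers :: "'a topology \<Rightarrow> (nat \<Rightarrow> 'a set) \<Rightarrow> bool" where
  "shrinks_into_open_covers X F \<longleftrightarrow>
     (\<forall>\<U>. open_cover X \<U> \<longrightarrow> (\<exists>n. \<exists>U\<in>\<U>. F n \<subseteq> U))"

lemma topological_contraction_iff:
  "topological_contraction X f \<longleftrightarrow>
     f \<in> topspace X \<rightarrow> topspace X \<and> closed_map X X f \<and>
     shrinks_into_open_covers X (\<lambda>n. (f ^^ n) ` topspace X)"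
  by (simp add: topological_contraction_def shrinks_into_open_covers_def)

lemma shrinks_into_open_covers_topspace_nonempty:
  assumes "shrinks_into_open_covers X F"
  shows "topspace X \<noteq> {}"
proof
  assume "topspace X = {}"
  then have "open_cover X {}"
    by (simp add: open_cover_def)
  with assms have "\<exists>n. \<exists>U\<in>{}. F n \<subseteq> U"
    unfolding shrinks_into_open_covers_def by (elim allE impE)
  then show False
    by simp
qed

lemma t1_space_open_cover_complements:
  assumes "t1_space X" and "x \<noteq> y"
  shows "open_cover X {topspace X - {x}, topspace X - {y}}"
proof -
  have "openin X (topspace X - {z})" for z
    by (meson assms(1) openin_topspace t1_space_openin_delete_alt)
  moreover have "(topspace X - {x}) \<union> (topspace X - {y}) = topspace X"
    using assms(2) by auto
  ultimately show ?thesis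
    by (simp add: open_cover_def)
qed

lemma t1_space_shrinks_into_open_covers_common_point_unique:
  assumes "t1_space X" and "shrinks_into_open_covers X F"
    and "\<And>n. x \<in> F n" and "\<And>n. y \<in> F n"
  shows "x = y"
proof (rule ccontr)
  assume "x \<noteq> y"
  with assms(1) have "open_cover X {topspace X - {x}, topspace X - {y}}"
    by (rule t1_space_open_cover_complements)
  with assms(2) have "\<exists>n. \<exists>U\<in>{topspace X - {x}, topspace X - {y}}. F n \<subseteq> U"
    unfolding shrinks_into_open_covers_def by (elim allE impE)
  then obtain n where "F n \<subseteq> topspace X - {x} \<or> F n \<subseteq> topspace X - {y}"
    by blast
  then show False
    using assms(3,4)[of n] by blast
qed

lemma centered_seq_decseq:
  assumes "decseq F" and "\<And>n. F n \<noteq> {}"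
  shows "centered_seq F"
  unfolding centered_seq_def
proof (intro allI impI)
  fix K :: "nat set"
  assume K: "finite K \<and> K \<noteq> {}"
  then have "F (Max K) \<subseteq> F k" if "k \<in> K" for k
    using assms(1) that by (simp add: decseq_def)
  then have "F (Max K) \<subseteq> \<Inter> (F ` K)"
    by blast
  then show "\<Inter> (F ` K) \<noteq> {}"
    using assms(2) by blast
qed

lemma cech_complete_decseq_Inter_nonempty:
  assumes "cech_complete X"
    and "\<And>n. closedin X (F n)" and "decseq F" and "\<And>n. F n \<noteq> {}"
    and "shrinks_into_open_covers X F"
  shows "\<Inter> (range F) \<noteq> {}"
proof -
  obtain \<U> :: "nat \<Rightarrow> 'a set set"
    where covers: "\<forall>i. open_cover X (\<U> i)"
      and complete: "\<forall>F. (\<forall>m. closedin X (F m)) \<and> centered_seq F \<and>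
                          (\<forall>i. \<exists>m. \<exists>U\<in>\<U> i. F m \<subseteq> U) \<longrightarrow> \<Inter> (range F) \<noteq> {}"
    using assms(1) unfolding cech_complete_def by (elim exE conjE)
  show ?thesis
  proof (rule complete[rule_format], intro conjI allI)
    show "closedin X (F m)" for m
      by (rule assms(2))
    show "centered_seq F"
      using assms(3,4) by (rule centered_seq_decseq)
    show "\<exists>m. \<exists>U\<in>\<U> i. F m \<subseteq> U" for i
      using assms(5) covers unfolding shrinks_into_open_covers_def by simp
  qed
qed

lemma closed_map_funpow:
  assumes "closed_map X X f"
  shows "closed_map X X (f ^^ n)"
proof (induction n)
  case 0
  then show ?case by (simp add: closed_map_def)
next
  case (Suc n)
  then show ?case
    unfolding funpow.simps(2) by (rule closed_map_compose[OF _ assms])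
qed

lemma decseq_funpow_image:
  assumes "f ` S \<subseteq> S"
  shows "decseq (\<lambda>n. (f ^^ n) ` S)"
proof (rule decseq_SucI)
  fix n
  have "(f ^^ Suc n) ` S = (f ^^ n) ` f ` S"
    by (simp only: funpow_Suc_right image_comp)
  also have "\<dots> \<subseteq> (f ^^ n) ` S"
    using assms by (rule image_mono)
  finally show "(f ^^ Suc n) ` S \<subseteq> (f ^^ n) ` S" .
qed

lemma funpow_image_invariant:
  assumes "f ` S \<subseteq> S" and "a \<in> (f ^^ n) ` S"
  shows "f a \<in> (f ^^ n) ` S"
proof -
  obtain s where "s \<in> S" and "a = (f ^^ n) s"
    using assms(2) by blast
  then have "f a = (f ^^ n) (f s)" and "f s \<in> S"
    using assms(1) by (auto simp: funpow_swap1)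
  then show ?thesis
    by blast
qed

lemma fixed_point_mem_funpow_image:
  assumes "x \<in> S" and "f x = x"
  shows "x \<in> (f ^^ n) ` S"
proof -
  have "(f ^^ n) x = x"
    using assms(2) by (induction n) simp_all
  with assms(1) show ?thesis
    by (metis image_eqI)
qed

lemma cech_complete_funpow_images_Inter_nonempty:
  assumes "cech_complete X" and "topological_contraction X f"
  shows "(\<Inter>n. (f ^^ n) ` topspace X) \<noteq> {}"
proof (rule cech_complete_decseq_Inter_nonempty[OF assms(1)])
  have closed: "closed_map X X f"
    and shrinks: "shrinks_into_open_covers X (\<lambda>n. (f ^^ n) ` topspace X)"
    using assms(2) by (simp_all add: topological_contraction_iff)
  show "shrinks_into_open_covers X (\<lambda>n. (f ^^ n) ` topspace X)"
    by (fact shrinks)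
  show "closedin X ((f ^^ n) ` topspace X)" for n
    using closed_map_funpow[OF closed] closedin_topspace by (simp add: closed_map_def)
  show "decseq (\<lambda>n. (f ^^ n) ` topspace X)"
    using closed_map_imp_subset_topspace[OF closed]
    by (intro decseq_funpow_image) (simp add: image_subset_iff_funcset)
  show "(f ^^ n) ` topspace X \<noteq> {}" for n
    using shrinks_into_open_covers_topspace_nonempty[OF shrinks] by simp
qed

theorem theorem1:
  fixes X :: "'a topology" and f :: "'a \<Rightarrow> 'a"
  assumes "t1_space X" and "cech_complete X" and "topological_contraction X f"
  shows "\<exists>!x. x \<in> topspace X \<and> f x = x"
proof -
  define K where "K n = (f ^^ n) ` topspace X" for n
  have self_map: "f ` topspace X \<subseteq> topspace X"
    using assms(3) by (simp add: topological_contraction_def image_subset_iff_funcset)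
  have shrinks: "shrinks_into_open_covers X K"
    using assms(3) by (simp add: topological_contraction_iff K_def[abs_def])
  obtain a where "a \<in> (\<Inter>n. K n)"
    using cech_complete_funpow_images_Inter_nonempty[OF assms(2,3)] unfolding K_def
    by (meson ex_in_conv)
  then have a: "a \<in> K n" for n
    by (rule INT_D) simp
  have unique: "x = a" if "\<And>n. x \<in> K n" for x
    using t1_space_shrinks_into_open_covers_common_point_unique[OF assms(1) shrinks that a] .
  have "f a \<in> K n" for n
    unfolding K_def using self_map a[of n, unfolded K_def] by (rule funpow_image_invariant)
  then have "f a = a"
    by (rule unique)
  moreover have "a \<in> topspace X"
    using a[of 0] by (simp add: K_def)
  moreover have "x = a" if "x \<in> topspace X" and "f x = x" for x
  proof (rule unique)
    show "x \<in> K n" for n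
      unfolding K_def using that by (rule fixed_point_mem_funpow_image)
  qed
  ultimately show ?thesis
    by blast
qed

end
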